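(* Let $m,p\in(0,\infty)$, let $(u,v)$ be an admissible pair of weights with respect to $(m,p)$, let $\varphi$ be the fundamental function of $CL^{m,p}(u,v)$ and let $\{t_k\}_{k\in\mathbb{K}}$ be a discretizing sequence of $CL^{m,p}(u,v)$. Then for every $k\in\mathbb{K}$ and every $t\in\Delta_{k-1}$, \[ \int_0^{t_k} v(s)\,ds\le \frac{2^{\frac pm+1}}{2^{\frac pm+1}-1}\int_{\Delta_{k-1}} v(s)\,ds \] and \[ \varphi^p(t)\le \frac{2^{\frac{3p}{m}+3}}{2^{\frac pm+1}-1}\int_{\Delta_{k-3}}v(s)\,ds\; U^{\frac pm}(\Delta_{k-2}) + 2^{\frac pm+2}\int_{\Delta_{k-2}} v(s)\,U^{\frac pm}(s,t_{k-1})\,ds + \frac{3\cdot 2^{\frac{2p}{m}+1}}{2^{\frac pm+1}-1}\int_{\Delta_{k-2}}v(s)\,ds\; U^{\frac pm}(t_{k-1},t). \]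
   Context: A weight is a nonnegative measurable function on $(0,\infty)$. For a weight $u$ and $0\le s\le t\le\infty$, $U(s,t):=\int_s^t u(x)\,dx$. For $m,p\in(0,\infty)$ and weights $u,v$, the fundamental function of $CL^{m,p}(u,v)$ is $\varphi(t):=\left(\int_0^t v(s)U(s,t)^{p/m}ds\right)^{1/p}$, $t\in(0,\infty]$; $(u,v)$ is admissible with respect to $(m,p)$ if $0<\varphi(t)<\infty$ for all $t\in(0,\infty)$. A discretizing sequence of $CL^{m,p}(u,v)$ is a sequence $\{t_k\}_{k\in\mathbb{K}}$ together with $K\in\{0,\infty\}$, $\mathbb{K}=\{k\in\mathbb{Z}: k\le 0\}$ if $K=0$ and $\mathbb{K}=\mathbb{Z}$ if $K=\infty$, and disjoint sets $\mathbb{K}_1,\mathbb{K}_2$ with union $\mathbb{K}$, such that: $0<t_{k-1}\le t_k<\infty$ for $k\in\mathbb{K}\setminus\{K\}$; $t_0=\infty$ if $K=0$; $\int_0^{t_k}v\ge 2^{p/m+1}\int_0^{t_{k-1}}v$ and $\varphi^p(t_k)\ge 2^{p/m+1}\varphi^p(t_{k-1})$ for all $k\in\mathbb{K}$; equality holds in the first of these for $k\in\mathbb{K}_1$ and in the second for $k\in\mathbb{K}_2$ (such sequences exist). For indices $k$ with $k+1\in\mathbb{K}$, $\Delta_k:=[t_k,t_{k+1}]$ and $U(\Delta_k):=U(t_k,t_{k+1})$. *)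

theory Defs
  imports "HOL-Analysis.Analysis"
begin

text \<open>Points of (0,\<infinity>] are represented as extended reals; all integrals of
  nonnegative functions are Lebesgue integrals with values in [0,\<infinity>] (ennreal).\<close>

definition weight :: "(real \<Rightarrow> real) \<Rightarrow> bool" where
  "weight w \<longleftrightarrow> set_borel_measurable borel {0<..} w \<and> (\<forall>x>0. 0 \<le> w x)"

definition epowr :: "ennreal \<Rightarrow> real \<Rightarrow> ennreal" where
  "epowr x a = (if x = top then top else ennreal (enn2real x powr a))"

definition wint :: "(real \<Rightarrow> real) \<Rightarrow> ereal \<Rightarrow> ereal \<Rightarrow> ennreal" where
  "wint w s t = (\<integral>\<^sup>+ x \<in> {x. 0 < x \<and> s \<le> ereal x \<and> ereal x \<le> t}. ennreal (w x) \<partial>lborel)"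

definition fund_p :: "real \<Rightarrow> real \<Rightarrow> (real \<Rightarrow> real) \<Rightarrow> (real \<Rightarrow> real) \<Rightarrow> ereal \<Rightarrow> ennreal" where
  "fund_p m p u v t = (\<integral>\<^sup>+ s \<in> {s. 0 < s \<and> ereal s \<le> t}.
       ennreal (v s) * epowr (wint u (ereal s) t) (p / m) \<partial>lborel)"

definition fund :: "real \<Rightarrow> real \<Rightarrow> (real \<Rightarrow> real) \<Rightarrow> (real \<Rightarrow> real) \<Rightarrow> ereal \<Rightarrow> ennreal" where
  "fund m p u v t = epowr (fund_p m p u v t) (1 / p)"

definition admissible :: "real \<Rightarrow> real \<Rightarrow> (real \<Rightarrow> real) \<Rightarrow> (real \<Rightarrow> real) \<Rightarrow> bool" where
  "admissible m p u v \<longleftrightarrow> (\<forall>t::real. 0 < t \<longrightarrow> 0 < fund m p u v (ereal t) \<and> fund m p u v (ereal t) < top)"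

text \<open>Discretizing sequence. \<open>finK\<close> = True means K = 0 (so \<open>\<KK> = {k \<le> 0}\<close>, t_0 = \<infinity>),
  \<open>finK\<close> = False means K = \<infinity> (so \<open>\<KK> = \<int>\<close>).\<close>
definition Kset :: "bool \<Rightarrow> int set" where
  "Kset finK = (if finK then {k. k \<le> 0} else UNIV)"

definition discretizing ::
  "real \<Rightarrow> real \<Rightarrow> (real \<Rightarrow> real) \<Rightarrow> (real \<Rightarrow> real) \<Rightarrow> (int \<Rightarrow> ereal) \<Rightarrow> bool \<Rightarrow> int set \<Rightarrow> int set \<Rightarrow> bool" where
  "discretizing m p u v t finK K1 K2 \<longleftrightarrow>
     K1 \<inter> K2 = {} \<and> K1 \<union> K2 = Kset finK \<and>
     (\<forall>k \<in> Kset finK - (if finK then {0} else {}). 0 < t (k - 1) \<and> t (k - 1) \<le> t k \<and> t k < \<infinity>) \<and>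
     (finK \<longrightarrow> t 0 = \<infinity>) \<and>
     (\<forall>k \<in> Kset finK.
        wint v 0 (t k) \<ge> ennreal (2 powr (p / m + 1)) * wint v 0 (t (k - 1)) \<and>
        epowr (fund m p u v (t k)) p \<ge> ennreal (2 powr (p / m + 1)) * epowr (fund m p u v (t (k - 1))) p) \<and>
     (\<forall>k \<in> K1. wint v 0 (t k) = ennreal (2 powr (p / m + 1)) * wint v 0 (t (k - 1))) \<and>
     (\<forall>k \<in> K2. epowr (fund m p u v (t k)) p = ennreal (2 powr (p / m + 1)) * epowr (fund m p u v (t (k - 1))) p)"

end

theory Submission
  imports Defs
begin

text \<open>Write V(t) = \<integral>_0^t v and r = p/m. Splitting \<phi>^p(b) = \<integral>_0^b v(s) U(s,b)^r ds at a \<le> b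
  and using (x + y)^r \<le> 2^r (x^r + y^r) gives
  \<phi>^p(b) \<le> 2^r \<phi>^p(a) + 2^r U(a,b)^r V(a) + \<integral>_a^b v(s) U(s,b)^r ds.
  Whenever X(t_k) \<le> X(t_{k-1}) + Y and the doubling inequality c X(t_{k-1}) \<le> X(t_k) holds
  with c = 2^(r+1) > 1, the term X(t_{k-1}) can be absorbed provided it is finite, leaving
  X(t_k) \<le> c/(c-1) Y. For X = V this is the first estimate; V(t_{k-1}) is finite because
  V(a) = \<infinity> together with U(a,b) > 0 would force \<phi>^p(b) = \<infinity>, against admissibility.
  For X = \<phi>^p it bounds \<phi>^p(t_{k-1}) by twice the last two terms of the splitting at t_{k-2}.
  Finally, for \<tau> \<in> \<Delta>_{k-1} either \<phi>^p(\<tau>) \<le> \<phi>^p(t_k) = c \<phi>^p(t_{k-1}) (k \<in> K_2), or the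
  splitting at t_{k-1} applies and V(\<tau>) \<le> V(t_k) = c V(t_{k-1}) (k \<in> K_1).\<close>

definition pos_Icc :: "ereal \<Rightarrow> ereal \<Rightarrow> real set" where
  "pos_Icc a b = {x. 0 < x \<and> a \<le> ereal x \<and> ereal x \<le> b}"

lemma pos_Icc_sets [measurable]: "pos_Icc a b \<in> sets borel"
  unfolding pos_Icc_def by measurable

subsection \<open>Weights and their integrals\<close>

lemma weight_restrict_measurable:
  assumes "weight w"
  shows "(\<lambda>x. ennreal (indicator {0<..} x * w x)) \<in> borel_measurable borel"
proof -
  have "(\<lambda>x. indicator {0<..} x * w x) \<in> borel_measurable borel"
    using assms unfolding weight_def set_borel_measurable_def by simp
  then show ?thesis by measurable
qed

lemma wint_eq_nn_integral:
  "wint w a b = (\<integral>\<^sup>+ x \<in> pos_Icc a b. ennreal (indicator {0<..} x * w x) \<partial>lborel)"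
  unfolding wint_def pos_Icc_def[symmetric]
  by (intro nn_integral_cong) (auto simp: indicator_def pos_Icc_def)

lemma wint_measurable_lower:
  assumes "weight w"
  shows "(\<lambda>s. wint w (ereal s) b) \<in> borel_measurable borel"
proof -
  have "(\<lambda>(s, x). ennreal (indicator {0<..} x * w x) * indicator {x. 0 < x \<and> ereal s \<le> ereal x \<and> ereal x \<le> b} x)
      \<in> borel_measurable (borel \<Otimes>\<^sub>M lborel)"
    using weight_restrict_measurable[OF assms] by measurable
  then have "(\<lambda>s. \<integral>\<^sup>+ x. ennreal (indicator {0<..} x * w x) * indicator {x. 0 < x \<and> ereal s \<le> ereal x \<and> ereal x \<le> b} x \<partial>lborel)
      \<in> borel_measurable borel"
    by (rule lborel.borel_measurable_nn_integral_fst[where f="\<lambda>(s, x). _ s x", simplified])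
  then show ?thesis
    unfolding wint_eq_nn_integral pos_Icc_def by simp
qed

lemma wint_mono: "a' \<le> a \<Longrightarrow> b \<le> b' \<Longrightarrow> wint w a b \<le> wint w a' b'"
  unfolding wint_def by (intro nn_integral_mono) (auto simp: indicator_def)

lemma wint_le_add:
  assumes "weight w" "a \<le> b" "b \<le> c"
  shows "wint w a c \<le> wint w a b + wint w b c"
proof -
  let ?g = "\<lambda>x. ennreal (indicator {0<..} x * w x)"
  have "wint w a c \<le> (\<integral>\<^sup>+ x. ?g x * indicator (pos_Icc a b) x + ?g x * indicator (pos_Icc b c) x \<partial>lborel)"
    unfolding wint_eq_nn_integral
    by (intro nn_integral_mono) (auto simp: indicator_def pos_Icc_def)
  also have "\<dots> = wint w a b + wint w b c"
    unfolding wint_eq_nn_integral using weight_restrict_measurable[OF assms(1)]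
    by (intro nn_integral_add) auto
  finally show ?thesis .
qed

lemma wint_pos_at_nat:
  assumes "weight w" "0 < wint w a \<infinity>"
  obtains n :: nat where "0 < wint w a (ereal (real n))"
proof -
  let ?g = "\<lambda>x. ennreal (indicator {0<..} x * w x)"
  have g: "?g \<in> borel_measurable borel"
    by (rule weight_restrict_measurable[OF assms(1)])
  have "\<exists>n::nat. 0 < wint w a (ereal (real n))"
  proof (rule ccontr)
    assume "\<nexists>n::nat. 0 < wint w a (ereal (real n))"
    then have "wint w a (ereal (real n)) = 0" for n :: nat
      by (simp add: not_gr_zero)
    then have "AE x in lborel. ?g x * indicator (pos_Icc a (ereal (real n))) x = 0" for n :: nat
      using g unfolding wint_eq_nn_integral by (subst (asm) nn_integral_0_iff_AE) auto
    then have "AE x in lborel. \<forall>n::nat. ?g x * indicator (pos_Icc a (ereal (real n))) x = 0"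
      by (subst AE_all_countable) blast
    then have "AE x in lborel. ?g x * indicator (pos_Icc a \<infinity>) x = 0"
    proof (rule AE_mp, intro AE_I2 impI)
      fix x
      assume x: "\<forall>n::nat. ?g x * indicator (pos_Icc a (ereal (real n))) x = 0"
      show "?g x * indicator (pos_Icc a \<infinity>) x = 0"
      proof (cases "x \<in> pos_Icc a \<infinity>")
        case True
        have "x \<le> real (nat \<lceil>x\<rceil>)" by linarith
        then have "x \<in> pos_Icc a (ereal (real (nat \<lceil>x\<rceil>)))"
          using True by (auto simp: pos_Icc_def)
        then show ?thesis using x[rule_format, of "nat \<lceil>x\<rceil>"] True by simp
      qed simp
    qed
    then have "wint w a \<infinity> = 0"
      unfolding wint_eq_nn_integral using g by (subst nn_integral_0_iff_AE) auto
    with assms(2) show False by simp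
  qed
  then show ?thesis using that by blast
qed

subsection \<open>Arithmetic in \<open>[0,\<infinity>]\<close>\<close>

lemma epowr_measurable [measurable]: "(\<lambda>x. epowr x a) \<in> borel_measurable (borel :: ennreal measure)"
  unfolding epowr_def by measurable

lemma epowr_mono: "x \<le> y \<Longrightarrow> 0 < a \<Longrightarrow> epowr x a \<le> epowr y a"
  unfolding epowr_def
  by (auto simp: top_unique less_top intro!: ennreal_leI powr_mono2 enn2real_mono)

lemma epowr_zero [simp]: "0 < a \<Longrightarrow> epowr 0 a = 0"
  unfolding epowr_def by simp

lemma epowr_top [simp]: "epowr top a = top"
  unfolding epowr_def by simp

lemma epowr_pos: "0 < x \<Longrightarrow> 0 < epowr x a"
  unfolding epowr_def by (auto simp: enn2real_eq_0_iff)

lemma epowr_epowr_inverse: "0 < p \<Longrightarrow> epowr (epowr x (1 / p)) p = x"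
  unfolding epowr_def by (cases x) (auto simp: powr_powr)

lemma epowr_add_le:
  assumes "0 < a"
  shows "epowr (x + y) a \<le> ennreal (2 powr a) * (epowr x a + epowr y a)"
proof (cases "x = top \<or> y = top")
  case True
  then show ?thesis by (auto simp: ennreal_mult_top)
next
  case False
  then obtain x' y' where xy: "x = ennreal x'" "y = ennreal y'" "0 \<le> x'" "0 \<le> y'"
    by (metis ennreal_cases top.not_eq_extremum less_top)
  have "(x' + y') powr a \<le> (2 * max x' y') powr a"
    using xy assms by (intro powr_mono2) auto
  also have "\<dots> = 2 powr a * max x' y' powr a"
    using xy by (simp add: powr_mult)
  also have "\<dots> \<le> 2 powr a * (x' powr a + y' powr a)"
    by (intro mult_left_mono) (auto simp: max_def)
  finally show ?thesis
    using xy unfolding epowr_def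
    by (simp add: ennreal_plus[symmetric] ennreal_mult[symmetric] del: ennreal_plus)
qed

lemma ennreal_le_of_absorb:
  fixes T A B :: ennreal and c :: real
  assumes "1 < c" "T \<le> A + B" "ennreal c * A \<le> T" "A < top"
  shows "T \<le> ennreal (c / (c - 1)) * B"
proof (cases "B = top")
  case True
  have "ennreal (c / (c - 1)) \<noteq> 0" using assms(1) by simp
  then show ?thesis using True by (simp add: ennreal_mult_top)
next
  case False
  obtain a b where ab: "A = ennreal a" "B = ennreal b" "0 \<le> a" "0 \<le> b"
    using assms(4) False by (metis ennreal_cases less_top)
  have "T < top" using assms(2) ab by (simp add: order.strict_trans1 flip: ennreal_plus)
  then obtain s where s: "T = ennreal s" "0 \<le> s" by (cases T) auto
  have "ennreal s \<le> ennreal (a + b)" using assms(2) ab s by (subst ennreal_plus) auto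
  then have "s \<le> a + b" using ab by (simp only: ennreal_le_iff add_nonneg_nonneg)
  moreover have "c * a \<le> s"
    using assms(1,3) ab s by (simp add: ennreal_le_iff flip: ennreal_mult)
  ultimately have "c * s \<le> s + c * b"
    using assms(1) mult_left_mono[of s "a + b" c] by (simp add: algebra_simps)
  then have "s \<le> c / (c - 1) * b"
    using assms(1) by (simp add: field_simps)
  then show ?thesis
    using assms(1) ab s by (simp add: ennreal_leI flip: ennreal_mult)
qed

subsection \<open>The fundamental function\<close>

lemma epowr_fund: "0 < p \<Longrightarrow> epowr (fund m p u v t) p = fund_p m p u v t"
  unfolding fund_def by (rule epowr_epowr_inverse)

lemma fund_p_eq_nn_integral:
  "fund_p m p u v b =
     (\<integral>\<^sup>+ s \<in> pos_Icc 0 b. ennreal (indicator {0<..} s * v s) * epowr (wint u (ereal s) b) (p / m) \<partial>lborel)"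
  unfolding fund_p_def
  by (intro nn_integral_cong) (auto simp: indicator_def pos_Icc_def)

lemma fund_p_mono:
  assumes "0 < p / m" "a \<le> b"
  shows "fund_p m p u v a \<le> fund_p m p u v b"
  unfolding fund_p_eq_nn_integral using assms
  by (intro nn_integral_mono)
     (auto simp: indicator_def pos_Icc_def intro!: mult_left_mono epowr_mono wint_mono)

lemma admissible_fund_p_pos:
  assumes "admissible m p u v" "0 < p" "0 < x"
  shows "0 < fund_p m p u v (ereal x)"
  using assms unfolding admissible_def fund_def by (metis epowr_zero gr_zeroI less_irrefl zero_less_divide_1_iff)

lemma admissible_fund_p_finite:
  assumes "admissible m p u v" "0 < x"
  shows "fund_p m p u v (ereal x) < top"
  using assms unfolding admissible_def fund_def by (metis epowr_top less_irrefl top.not_eq_extremum)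

lemma fund_p_ge_wint_mult:
  assumes "weight v" "0 < p / m" "a \<le> b"
  shows "epowr (wint u a b) (p / m) * wint v 0 a \<le> fund_p m p u v b"
proof -
  have "epowr (wint u a b) (p / m) * wint v 0 a
      = (\<integral>\<^sup>+ s \<in> pos_Icc 0 a. epowr (wint u a b) (p / m) * ennreal (indicator {0<..} s * v s) \<partial>lborel)"
    unfolding wint_eq_nn_integral using weight_restrict_measurable[OF assms(1)]
    by (subst nn_integral_cmult[symmetric]) (auto simp: ac_simps)
  also have "\<dots> \<le> fund_p m p u v b"
    unfolding fund_p_eq_nn_integral using assms
    by (intro nn_integral_mono)
       (auto simp: indicator_def pos_Icc_def mult.commute intro!: mult_left_mono epowr_mono wint_mono)
  finally show ?thesis .
qed

lemma tail_nn_integral_le: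
  assumes "weight v" "0 < r"
  shows "(\<integral>\<^sup>+ s \<in> pos_Icc a b. ennreal (v s) * epowr (wint u (ereal s) b) r \<partial>lborel)
    \<le> epowr (wint u a b) r * wint v a b"
proof -
  have "(\<integral>\<^sup>+ s \<in> pos_Icc a b. ennreal (v s) * epowr (wint u (ereal s) b) r \<partial>lborel)
      \<le> (\<integral>\<^sup>+ s. epowr (wint u a b) r * (ennreal (indicator {0<..} s * v s) * indicator (pos_Icc a b) s) \<partial>lborel)"
    using assms(2) by (intro nn_integral_mono)
       (auto simp: indicator_def pos_Icc_def mult.commute intro!: mult_left_mono epowr_mono wint_mono)
  also have "\<dots> = epowr (wint u a b) r * wint v a b"
    unfolding wint_eq_nn_integral using weight_restrict_measurable[OF assms(1)]
    by (simp add: nn_integral_cmult)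
  finally show ?thesis .
qed

lemma fund_p_le_split:
  assumes u: "weight u" and v: "weight v" and r: "0 < p / m" and "a \<le> b"
  shows "fund_p m p u v b \<le> ennreal (2 powr (p / m)) * fund_p m p u v a
     + ennreal (2 powr (p / m)) * epowr (wint u a b) (p / m) * wint v 0 a
     + (\<integral>\<^sup>+ s \<in> pos_Icc a b. ennreal (v s) * epowr (wint u (ereal s) b) (p / m) \<partial>lborel)"
proof -
  define g where "g s = ennreal (indicator {0<..} s * v s)" for s
  define E where "E s b = epowr (wint u (ereal s) b) (p / m)" for s b
  define h where "h = ennreal (2 powr (p / m))"
  have g: "g \<in> borel_measurable borel"
    unfolding g_def by (rule weight_restrict_measurable[OF v])
  have E: "(\<lambda>s. E s b) \<in> borel_measurable borel" for b
    unfolding E_def using measurable_compose[OF wint_measurable_lower[OF u] epowr_measurable] .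
  have pointwise: "g s * E s b * indicator (pos_Icc 0 b) s
      \<le> h * (g s * E s a * indicator (pos_Icc 0 a) s)
        + h * epowr (wint u a b) (p / m) * (g s * indicator (pos_Icc 0 a) s)
        + g s * E s b * indicator (pos_Icc a b) s" for s
  proof (cases "s \<in> pos_Icc 0 a")
    case True
    then have "ereal s \<le> a" by (simp add: pos_Icc_def)
    then have "E s b \<le> epowr (wint u (ereal s) a + wint u a b) (p / m)"
      unfolding E_def using assms(4) by (intro epowr_mono r wint_le_add u)
    also have "\<dots> \<le> h * (E s a + epowr (wint u a b) (p / m))"
      unfolding E_def h_def by (rule epowr_add_le[OF r])
    finally have "g s * E s b \<le> g s * (h * (E s a + epowr (wint u a b) (p / m)))"
      by (rule mult_left_mono) simp
    then show ?thesis
      using True assms(4) by (simp add: algebra_simps indicator_def pos_Icc_def)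
  next
    case False
    then show ?thesis by (auto simp: indicator_def pos_Icc_def not_le)
  qed
  have "fund_p m p u v b = (\<integral>\<^sup>+ s. g s * E s b * indicator (pos_Icc 0 b) s \<partial>lborel)"
    unfolding fund_p_eq_nn_integral g_def E_def ..
  also have "\<dots> \<le> (\<integral>\<^sup>+ s. h * (g s * E s a * indicator (pos_Icc 0 a) s)
        + h * epowr (wint u a b) (p / m) * (g s * indicator (pos_Icc 0 a) s)
        + g s * E s b * indicator (pos_Icc a b) s \<partial>lborel)"
    by (intro nn_integral_mono pointwise)
  also have "\<dots> = h * (\<integral>\<^sup>+ s. g s * E s a * indicator (pos_Icc 0 a) s \<partial>lborel)
      + h * epowr (wint u a b) (p / m) * (\<integral>\<^sup>+ s. g s * indicator (pos_Icc 0 a) s \<partial>lborel)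
      + (\<integral>\<^sup>+ s. g s * E s b * indicator (pos_Icc a b) s \<partial>lborel)"
    using g E by (simp add: nn_integral_add nn_integral_cmult)
  also have "(\<integral>\<^sup>+ s. g s * E s b * indicator (pos_Icc a b) s \<partial>lborel)
      = (\<integral>\<^sup>+ s \<in> pos_Icc a b. ennreal (v s) * epowr (wint u (ereal s) b) (p / m) \<partial>lborel)"
    by (intro nn_integral_cong) (auto simp: g_def E_def indicator_def pos_Icc_def)
  also have "(\<integral>\<^sup>+ s. g s * E s a * indicator (pos_Icc 0 a) s \<partial>lborel) = fund_p m p u v a"
    unfolding fund_p_eq_nn_integral g_def E_def ..
  also have "(\<integral>\<^sup>+ s. g s * indicator (pos_Icc 0 a) s \<partial>lborel) = wint v 0 a"
    unfolding wint_eq_nn_integral g_def ..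
  finally show ?thesis unfolding h_def .
qed

lemma wint_pos_of_fund_p_growth:
  assumes "weight u" "weight v" "admissible m p u v" "0 < m" "0 < p" "0 < a" "ereal a \<le> b"
    and growth: "ennreal (2 powr (p / m + 1)) * fund_p m p u v (ereal a) \<le> fund_p m p u v b"
  shows "0 < wint u (ereal a) b"
proof (rule ccontr)
  assume "\<not> 0 < wint u (ereal a) b"
  then have U: "wint u (ereal a) b = 0" by simp
  have r: "0 < p / m" using assms(4,5) by simp
  define h where "h = 2 powr (p / m)"
  have h: "0 < h" unfolding h_def by simp
  obtain q where q: "fund_p m p u v (ereal a) = ennreal q" "0 < q"
    using admissible_fund_p_pos[OF assms(3,5,6)] admissible_fund_p_finite[OF assms(3,6)]
    by (metis ennreal_cases ennreal_less_zero_iff less_top)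
  have "ennreal (2 * h * q) \<le> fund_p m p u v b"
    using growth h q by (simp add: h_def powr_add ennreal_mult mult.commute)
  also have "fund_p m p u v b \<le> ennreal (h * q)"
    using fund_p_le_split[OF assms(1,2) r assms(7)] tail_nn_integral_le[OF assms(2) r, where a="ereal a" and b=b and u=u]
      U r q h by (simp add: h_def ennreal_mult)
  finally show False using h q by (simp add: ennreal_le_iff mult_le_cancel_right)
qed

lemma wint_finite_of_fund_p_growth:
  assumes u: "weight u" and v: "weight v" and adm: "admissible m p u v" and "0 < m" "0 < p"
    and a: "0 < a" and ab: "ereal a \<le> b"
    and growth: "ennreal (2 powr (p / m + 1)) * fund_p m p u v (ereal a) \<le> fund_p m p u v b"
  shows "wint v 0 (ereal a) < top"
proof (rule ccontr)
  assume V: "\<not> wint v 0 (ereal a) < top"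
  have r: "0 < p / m" using assms(4,5) by simp
  have U: "0 < wint u (ereal a) b"
    using wint_pos_of_fund_p_growth[OF assms] .
  obtain b' where b': "a \<le> b'" "0 < wint u (ereal a) (ereal b')"
  proof (cases b)
    case PInf
    then obtain n :: nat where "0 < wint u (ereal a) (ereal (real n))"
      using wint_pos_at_nat[OF u] U by blast
    then have "0 < wint u (ereal a) (ereal (max a (real n)))"
      using wint_mono[of "ereal a" "ereal a" "ereal (real n)" "ereal (max a (real n))" u] by simp
    then show ?thesis using that[of "max a (real n)"] by simp
  qed (use that ab U in auto)
  have "epowr (wint u (ereal a) (ereal b')) (p / m) \<noteq> 0"
    using epowr_pos[OF b'(2), of "p / m"] by simp
  then have "epowr (wint u (ereal a) (ereal b')) (p / m) * wint v 0 (ereal a) = top"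
    using V by (simp add: less_top[symmetric] ennreal_mult_top)
  then show False
    using fund_p_ge_wint_mult[OF v r, where a="ereal a" and b="ereal b'" and u=u] b'(1)
      admissible_fund_p_finite[OF adm, of b'] a by (simp add: top_unique)
qed

subsection \<open>Discretizing sequences\<close>

lemma Kset_downward_closed: "j \<in> Kset finK \<Longrightarrow> i \<le> j \<Longrightarrow> i \<in> Kset finK"
  unfolding Kset_def by (auto split: if_splits)

lemma discretizing_step:
  assumes "discretizing m p u v t finK K1 K2" "j \<in> Kset finK"
  shows "t (j - 1) \<le> t j" "\<exists>x>0. t (j - 1) = ereal x"
proof -
  have inner: "\<forall>k \<in> Kset finK - (if finK then {0} else {}). 0 < t (k - 1) \<and> t (k - 1) \<le> t k \<and> t k < \<infinity>"
    and last: "finK \<longrightarrow> t 0 = \<infinity>"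
    using assms(1) unfolding discretizing_def by blast+
  have "0 < t (j - 1) \<and> t (j - 1) \<le> t j \<and> t (j - 1) < \<infinity>"
  proof (cases "finK \<and> j = 0")
    case True
    then have "-1 \<in> Kset finK - (if finK then {0} else {})" by (simp add: Kset_def)
    then have "0 < t (-1 - 1) \<and> t (-1 - 1) \<le> t (-1) \<and> t (-1) < \<infinity>" using inner by blast
    then show ?thesis using True last by auto
  next
    case False
    then have "0 < t (j - 1) \<and> t (j - 1) \<le> t j \<and> t j < \<infinity>" using inner assms(2) by auto
    then show ?thesis using order.strict_trans1 by blast
  qed
  then show "t (j - 1) \<le> t j" "\<exists>x>0. t (j - 1) = ereal x"
    by (cases "t (j - 1)"; auto)+
qed

lemma discretizing_growth:
  assumes "discretizing m p u v t finK K1 K2" "j \<in> Kset finK" "0 < p"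
  shows "ennreal (2 powr (p / m + 1)) * wint v 0 (t (j - 1)) \<le> wint v 0 (t j)"
    "ennreal (2 powr (p / m + 1)) * fund_p m p u v (t (j - 1)) \<le> fund_p m p u v (t j)"
  using assms unfolding discretizing_def epowr_fund[OF assms(3)] by auto

lemma discretizing_cases:
  assumes "discretizing m p u v t finK K1 K2" "j \<in> Kset finK" "0 < p"
  shows "wint v 0 (t j) = ennreal (2 powr (p / m + 1)) * wint v 0 (t (j - 1))
    \<or> fund_p m p u v (t j) = ennreal (2 powr (p / m + 1)) * fund_p m p u v (t (j - 1))"
  using assms unfolding discretizing_def epowr_fund[OF assms(3)] by blast

lemma discretizing_wint_le:
  assumes u: "weight u" and v: "weight v" and adm: "admissible m p u v" and "0 < m" "0 < p"
    and D: "discretizing m p u v t finK K1 K2" and j: "j \<in> Kset finK"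
  shows "wint v 0 (t j)
    \<le> ennreal (2 powr (p / m + 1) / (2 powr (p / m + 1) - 1)) * wint v (t (j - 1)) (t j)"
proof (rule ennreal_le_of_absorb)
  obtain x where x: "0 < x" "t (j - 1) = ereal x"
    using discretizing_step(2)[OF D j] by blast
  have le: "t (j - 1) \<le> t j" by (rule discretizing_step(1)[OF D j])
  show "1 < 2 powr (p / m + 1)"
    using assms(4,5) by (intro gr_one_powr) (simp_all add: add_pos_pos)
  show "wint v 0 (t j) \<le> wint v 0 (t (j - 1)) + wint v (t (j - 1)) (t j)"
    using x le by (intro wint_le_add v) auto
  show "ennreal (2 powr (p / m + 1)) * wint v 0 (t (j - 1)) \<le> wint v 0 (t j)"
    by (rule discretizing_growth(1)[OF D j assms(5)])
  show "wint v 0 (t (j - 1)) < top"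
    using wint_finite_of_fund_p_growth[OF u v adm assms(4,5) x(1), of "t j"] x le
      discretizing_growth(2)[OF D j assms(5)] by simp
qed

lemma discretizing_fund_p_prev_le:
  assumes u: "weight u" and v: "weight v" and adm: "admissible m p u v" and "0 < m" "0 < p"
    and D: "discretizing m p u v t finK K1 K2" and k: "k \<in> Kset finK"
  shows "fund_p m p u v (t (k - 1))
    \<le> 2 * (ennreal (2 powr (p / m)) * epowr (wint u (t (k - 2)) (t (k - 1))) (p / m) * wint v 0 (t (k - 2))
      + (\<integral>\<^sup>+ s \<in> pos_Icc (t (k - 2)) (t (k - 1)). ennreal (v s) * epowr (wint u (ereal s) (t (k - 1))) (p / m) \<partial>lborel))"
proof -
  have r: "0 < p / m" using assms(4,5) by simp
  have k1: "k - 1 \<in> Kset finK" using Kset_downward_closed[OF k] by simp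
  have k11: "k - 1 - 1 = k - 2" by simp
  obtain x where x: "0 < x" "t (k - 1) = ereal x"
    using discretizing_step(2)[OF D k] by blast
  define H where "H = ennreal (2 powr (p / m))"
  define P where "P = fund_p m p u v (t (k - 1))"
  define F where "F = fund_p m p u v (t (k - 2))"
  define R where "R = H * epowr (wint u (t (k - 2)) (t (k - 1))) (p / m) * wint v 0 (t (k - 2))
    + (\<integral>\<^sup>+ s \<in> pos_Icc (t (k - 2)) (t (k - 1)). ennreal (v s) * epowr (wint u (ereal s) (t (k - 1))) (p / m) \<partial>lborel)"
  have split: "P \<le> H * F + R"
    using fund_p_le_split[OF u v r discretizing_step(1)[OF D k1, unfolded k11]]
    unfolding H_def P_def F_def R_def by (simp add: add.assoc)
  have growth: "ennreal 2 * (H * F) \<le> P"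
    using discretizing_growth(2)[OF D k1 assms(5)]
    unfolding H_def P_def F_def k11 by (simp add: powr_add ennreal_mult mult_ac)
  have "P < top"
    unfolding P_def using admissible_fund_p_finite[OF adm x(1)] x(2) by simp
  then have "H * F < top"
    using growth top.not_eq_extremum by fastforce
  have "P \<le> ennreal (2 / (2 - 1)) * R"
    by (rule ennreal_le_of_absorb[OF _ split growth \<open>H * F < top\<close>]) simp
  then show ?thesis unfolding P_def H_def R_def by simp
qed

lemma discretizing_fund_p_le_within:
  assumes u: "weight u" and v: "weight v" and "0 < m" "0 < p"
    and D: "discretizing m p u v t finK K1 K2" and k: "k \<in> Kset finK"
    and \<tau>: "t (k - 1) \<le> \<tau>" "\<tau> \<le> t k"
  shows "fund_p m p u v \<tau>
    \<le> 2 * ennreal (2 powr (p / m)) * fund_p m p u v (t (k - 1))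
      + 3 * ennreal (2 powr (p / m)) * epowr (wint u (t (k - 1)) \<tau>) (p / m) * wint v 0 (t (k - 1))"
proof -
  have r: "0 < p / m" using assms(3,4) by simp
  obtain x where x: "0 < x" "t (k - 1) = ereal x"
    using discretizing_step(2)[OF D k] by blast
  define H where "H = ennreal (2 powr (p / m))"
  define P where "P = fund_p m p u v (t (k - 1))"
  define X where "X = epowr (wint u (t (k - 1)) \<tau>) (p / m)"
  define A where "A = wint v 0 (t (k - 1))"
  have c: "ennreal (2 powr (p / m + 1)) = 2 * H"
    unfolding H_def by (simp add: powr_add ennreal_mult mult.commute)
  consider "wint v 0 (t k) = 2 * H * A" | "fund_p m p u v (t k) = 2 * H * P"
    using discretizing_cases[OF D k assms(4)] unfolding c A_def P_def by blast
  then show ?thesis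
  proof cases
    case 1
    have "fund_p m p u v \<tau> \<le> H * P + H * X * A
        + (\<integral>\<^sup>+ s \<in> pos_Icc (t (k - 1)) \<tau>. ennreal (v s) * epowr (wint u (ereal s) \<tau>) (p / m) \<partial>lborel)"
      using fund_p_le_split[OF u v r \<tau>(1)] unfolding H_def P_def X_def A_def .
    also have "\<dots> \<le> H * P + H * X * A + X * wint v (t (k - 1)) \<tau>"
      using tail_nn_integral_le[OF v r] unfolding X_def by (rule add_left_mono)
    also have "wint v (t (k - 1)) \<tau> \<le> 2 * H * A"
      using wint_mono[of 0 "t (k - 1)" \<tau> "t k" v] 1 \<tau> x by simp
    finally have "fund_p m p u v \<tau> \<le> H * P + (H * X * A + X * (2 * H * A))"
      by (simp add: add.assoc mult_left_mono add_left_mono)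
    also have "H * X * A + X * (2 * H * A) = 3 * (H * X * A)"
      using distrib_right[of 1 2 "H * X * A"] by (simp add: mult_ac)
    also have "H * P + 3 * (H * X * A) \<le> 2 * H * P + 3 * H * X * A"
      by (intro add_mono mult_right_mono) (simp_all add: mult_2 mult.assoc)
    finally show ?thesis unfolding H_def P_def X_def A_def .
  next
    case 2
    then have "fund_p m p u v \<tau> \<le> 2 * H * P"
      using fund_p_mono[OF r \<tau>(2), where u = u and v = v] by simp
    then show ?thesis unfolding H_def P_def X_def A_def by (simp add: add_increasing2)
  qed
qed

lemma theorem3p7_coefficients:
  fixes p m :: real
  assumes "0 < p / m"
  defines "h \<equiv> ennreal (2 powr (p / m))" and "C \<equiv> ennreal (2 powr (p / m + 1) / (2 powr (p / m + 1) - 1))"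
  shows "ennreal (2 powr (3 * p / m + 3) / (2 powr (p / m + 1) - 1)) = 4 * h\<^sup>2 * C"
    "ennreal (2 powr (p / m + 2)) = 4 * h"
    "ennreal (3 * 2 powr (2 * p / m + 1) / (2 powr (p / m + 1) - 1)) = 3 * h * C"
proof -
  define c where "c = 2 powr (p / m + 1)"
  have c1: "1 < c" unfolding c_def using assms(1) by (intro gr_one_powr) (simp_all add: add_pos_pos)
  define x where "x = 2 powr (p / m)"
  have c: "c = 2 * x" unfolding c_def x_def by (simp add: powr_add)
  have "3 * p / m + 3 = p / m + (p / m + (p / m + 3))" by (simp add: field_simps)
  then have "2 powr (3 * p / m + 3) = x * (x * (x * 8))"
    unfolding x_def by (simp only: powr_add) simp
  then have "2 powr (3 * p / m + 3) / (c - 1) = (4 * x ^ 2) * (c / (c - 1))"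
    unfolding c by (simp add: power2_eq_square)
  then have "ennreal (2 powr (3 * p / m + 3) / (c - 1)) = ennreal (4 * x ^ 2) * C"
    unfolding C_def c_def[symmetric] using c1 by (simp only:) (rule ennreal_mult; simp)
  then show "ennreal (2 powr (3 * p / m + 3) / (2 powr (p / m + 1) - 1)) = 4 * h\<^sup>2 * C"
    unfolding h_def c_def[symmetric] x_def[symmetric] by (simp add: ennreal_mult ennreal_power x_def)
  show "ennreal (2 powr (p / m + 2)) = 4 * h"
    unfolding h_def by (simp add: powr_add ennreal_mult mult.commute)
  have "2 * p / m + 1 = p / m + (p / m + 1)" by (simp add: field_simps)
  then have "2 powr (2 * p / m + 1) = x * (x * 2)"
    unfolding x_def by (simp only: powr_add) simp
  then have "3 * 2 powr (2 * p / m + 1) / (c - 1) = (3 * x) * (c / (c - 1))"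
    unfolding c by simp
  then have "ennreal (3 * 2 powr (2 * p / m + 1) / (c - 1)) = ennreal (3 * x) * C"
    unfolding C_def c_def[symmetric] using c1 by (simp only:) (rule ennreal_mult; simp add: x_def)
  then show "ennreal (3 * 2 powr (2 * p / m + 1) / (2 powr (p / m + 1) - 1)) = 3 * h * C"
    unfolding h_def c_def[symmetric] x_def[symmetric] by (simp add: ennreal_mult x_def)
qed

theorem theorem3p7:
  fixes m p :: real and u v :: "real \<Rightarrow> real" and t :: "int \<Rightarrow> ereal"
    and finK :: bool and K1 K2 :: "int set" and k :: int and \<tau> :: ereal
  assumes "0 < m" and "0 < p"
    and "weight u" and "weight v"
    and "admissible m p u v"
    and "discretizing m p u v t finK K1 K2"
    and "k \<in> Kset finK"
    and "t (k - 1) \<le> \<tau>" and "\<tau> \<le> t k"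
  shows "wint v 0 (t k)
           \<le> ennreal (2 powr (p / m + 1) / (2 powr (p / m + 1) - 1)) * wint v (t (k - 1)) (t k)
     \<and> epowr (fund m p u v \<tau>) p
           \<le> ennreal (2 powr (3 * p / m + 3) / (2 powr (p / m + 1) - 1))
                * wint v (t (k - 3)) (t (k - 2)) * epowr (wint u (t (k - 2)) (t (k - 1))) (p / m)
             + ennreal (2 powr (p / m + 2))
                * (\<integral>\<^sup>+ s \<in> {s. 0 < s \<and> t (k - 2) \<le> ereal s \<and> ereal s \<le> t (k - 1)}.
                     ennreal (v s) * epowr (wint u (ereal s) (t (k - 1))) (p / m) \<partial>lborel)
             + ennreal (3 * 2 powr (2 * p / m + 1) / (2 powr (p / m + 1) - 1))
                * wint v (t (k - 2)) (t (k - 1)) * epowr (wint u (t (k - 1)) \<tau>) (p / m)"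
proof -
  note hyps = assms(3-5,1,2,6)
  define H where "H = ennreal (2 powr (p / m))"
  define C where "C = ennreal (2 powr (p / m + 1) / (2 powr (p / m + 1) - 1))"
  define I where "I = (\<integral>\<^sup>+ s \<in> pos_Icc (t (k - 2)) (t (k - 1)).
    ennreal (v s) * epowr (wint u (ereal s) (t (k - 1))) (p / m) \<partial>lborel)"
  have V: "wint v 0 (t j) \<le> C * wint v (t (j - 1)) (t j)" if "j \<le> k" for j
    using discretizing_wint_le[OF hyps Kset_downward_closed[OF assms(7) that]] unfolding C_def .
  have V1: "wint v 0 (t (k - 1)) \<le> C * wint v (t (k - 2)) (t (k - 1))"
    using V[of "k - 1"] by (simp add: diff_diff_eq)
  have V2: "wint v 0 (t (k - 2)) \<le> C * wint v (t (k - 3)) (t (k - 2))"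
    using V[of "k - 2"] by (simp add: diff_diff_eq)
  define X1 where "X1 = epowr (wint u (t (k - 1)) \<tau>) (p / m)"
  define X2 where "X2 = epowr (wint u (t (k - 2)) (t (k - 1))) (p / m)"
  have P: "fund_p m p u v (t (k - 1)) \<le> 2 * (H * X2 * (C * wint v (t (k - 3)) (t (k - 2))) + I)"
    using discretizing_fund_p_prev_le[OF hyps assms(7)] V2
    unfolding H_def[symmetric] I_def[symmetric] X2_def[symmetric]
    by (elim order.trans) (intro mult_left_mono add_mono order.refl; simp)
  have "epowr (fund m p u v \<tau>) p \<le> 2 * H * fund_p m p u v (t (k - 1)) + 3 * H * X1 * wint v 0 (t (k - 1))"
    using discretizing_fund_p_le_within[OF assms(3,4,1,2,6,7,8,9)]
    unfolding epowr_fund[OF assms(2)] H_def X1_def .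
  also have "\<dots> \<le> 2 * H * (2 * (H * X2 * (C * wint v (t (k - 3)) (t (k - 2))) + I))
      + 3 * H * X1 * (C * wint v (t (k - 2)) (t (k - 1)))"
    using P V1 by (intro add_mono mult_left_mono) simp_all
  also have "\<dots> = 4 * H\<^sup>2 * C * wint v (t (k - 3)) (t (k - 2)) * X2 + 4 * H * I
      + 3 * H * C * wint v (t (k - 2)) (t (k - 1)) * X1"
    by (simp add: algebra_simps power2_eq_square)
  finally show ?thesis
    using V[of k] theorem3p7_coefficients[of p m] assms(1,2)
    unfolding H_def C_def I_def X1_def X2_def pos_Icc_def by simp
qed

end
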